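(* Let $C$ be a normal closed cone with nonempty interior in a real Banach space $X$. Let $f:\operatorname{int} C \to \operatorname{int} C$ be order-preserving and homogeneous, and suppose $f$ has an eigenvector in $\operatorname{int} C$. Let $g(x) = f(x)/\|f(x)\|$ for $x \in \operatorname{int} C$. Then for every $x \in \operatorname{int} C$, the closure of the orbit $\mathcal{O}(x, r_C(f)^{-1} f)$ is compact if and only if the closure of the orbit $\mathcal{O}(x, g)$ is compact.
   Context: A closed cone is a closed convex set $C \subset X$ with $\lambda C \subset C$ for $\lambda \ge 0$ and $C \cap (-C) = \{0\}$; $x\le y$ means $y-x\in C$. $C$ is normal if there is $\kappa > 0$ with $\|x\| \le \kappa \|y\|$ whenever $0 \le x \le y$. $f$ is homogeneous if $f(tx) = t f(x)$ for all $t > 0$. The cone spectral radius is $r_C(f) = \limsup_{k\to\infty} \|f^k(x)\|^{1/k}$ for any $x \in \operatorname{int} C$ (independent of $x$, and positive). The orbit of $x$ under a map $h$ is $\mathcal{O}(x,h) = \{h^k(x): k \in \mathbb{N}\}$. *)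

theory Defs
  imports "HOL-Analysis.Analysis"
begin

definition closed_cone :: "'a::real_normed_vector set \<Rightarrow> bool" where
  "closed_cone C \<longleftrightarrow> closed C \<and> convex C \<and> (\<forall>x\<in>C. \<forall>t::real. t \<ge> 0 \<longrightarrow> t *\<^sub>R x \<in> C)
     \<and> C \<inter> uminus ` C = {0}"

definition cone_le :: "'a::real_normed_vector set \<Rightarrow> 'a \<Rightarrow> 'a \<Rightarrow> bool" where
  "cone_le C x y \<longleftrightarrow> y - x \<in> C"

definition normal_cone :: "'a::real_normed_vector set \<Rightarrow> bool" where
  "normal_cone C \<longleftrightarrow> (\<exists>\<kappa>>0. \<forall>x y. cone_le C 0 x \<and> cone_le C x y \<longrightarrow> norm x \<le> \<kappa> * norm y)"

definition order_preserving_on :: "'a::real_normed_vector set \<Rightarrow> 'a set \<Rightarrow> ('a \<Rightarrow> 'a) \<Rightarrow> bool" where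
  "order_preserving_on C U f \<longleftrightarrow> (\<forall>x\<in>U. \<forall>y\<in>U. cone_le C x y \<longrightarrow> cone_le C (f x) (f y))"

definition homogeneous_on :: "'a::real_normed_vector set \<Rightarrow> ('a \<Rightarrow> 'a) \<Rightarrow> bool" where
  "homogeneous_on U f \<longleftrightarrow> (\<forall>x\<in>U. \<forall>t::real. t > 0 \<longrightarrow> f (t *\<^sub>R x) = t *\<^sub>R f x)"

text \<open>Cone spectral radius: limsup of norm (f^k x) powr (1/k) for a point x of int C
  (the value is independent of the chosen interior point; we fix one by choice).\<close>
definition cone_spectral_radius :: "'a::real_normed_vector set \<Rightarrow> ('a \<Rightarrow> 'a) \<Rightarrow> real" where
  "cone_spectral_radius C f =
     real_of_ereal (limsup (\<lambda>k. ereal (norm ((f ^^ k) (SOME x. x \<in> interior C)) powr (1 / real k))))"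

definition orbit :: "'a \<Rightarrow> ('a \<Rightarrow> 'a) \<Rightarrow> 'a set" where
  "orbit x h = range (\<lambda>k. (h ^^ k) x)"

end

theory Submission
  imports Defs
begin

text \<open>If \<open>f v = \<mu> v\<close> with \<open>v\<close> interior, then \<open>\<mu> > 0\<close> and \<open>T = \<mu>\<inverse> f\<close> fixes \<open>v\<close>.
  Every interior \<open>y\<close> lies between \<open>a v\<close> and \<open>b v\<close> for some \<open>a, b > 0\<close>; since \<open>T\<close> is
  order-preserving and homogeneous, so does every iterate \<open>T\<^sup>k y\<close>, and normality confines
  \<open>\<parallel>T\<^sup>k y\<parallel>\<close> to an interval \<open>[c\<^sub>1, c\<^sub>2]\<close> with \<open>c\<^sub>1 > 0\<close>. Hence
  \<open>\<parallel>f\<^sup>k y\<parallel>\<^bsup>1/k\<^esup> = \<mu> \<parallel>T\<^sup>k y\<parallel>\<^bsup>1/k\<^esup> \<longrightarrow> \<mu>\<close>, i.e. \<open>r\<^sub>C(f) = \<mu>\<close>, and the \<open>g\<close>-orbit is the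
  normalised \<open>T\<close>-orbit: \<open>g\<^sup>k y = T\<^sup>k y / \<parallel>T\<^sup>k y\<parallel>\<close> for \<open>k \<ge> 1\<close>. On a set with norms in
  \<open>[c\<^sub>1, c\<^sub>2]\<close> normalisation is continuous and is undone by \<open>(t, z) \<mapsto> t z\<close> on
  \<open>[c\<^sub>1, c\<^sub>2] \<times> (normalised set)\<close>, so the two orbit closures are compact together.\<close>

lemma closed_cone_scaleR:
  "closed_cone C \<Longrightarrow> z \<in> C \<Longrightarrow> 0 \<le> t \<Longrightarrow> t *\<^sub>R z \<in> C"
  unfolding closed_cone_def by blast

lemma closed_cone_scaleR_interior:
  fixes C :: "'a::real_normed_vector set"
  assumes "closed_cone C" "z \<in> interior C" "0 < t"
  shows "t *\<^sub>R z \<in> interior C"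
proof -
  have "open ((*\<^sub>R) t ` interior C)" using assms(3) by (intro open_scaling) auto
  moreover have "(*\<^sub>R) t ` interior C \<subseteq> C"
    using assms interior_subset closed_cone_scaleR by fastforce
  ultimately have "(*\<^sub>R) t ` interior C \<subseteq> interior C" using interior_maximal by blast
  thus ?thesis using assms(2) by blast
qed

lemma closed_cone_zero_interior:
  fixes C :: "'a::real_normed_vector set" and z :: 'a
  assumes "closed_cone C" "0 \<in> interior C"
  shows "z = 0"
proof (rule ccontr)
  assume "z \<noteq> 0"
  obtain e where e: "e > 0" "ball 0 e \<subseteq> C" using assms(2) mem_interior by blast
  define w where "w = (e / (2 * norm z)) *\<^sub>R z"
  have nw: "norm w = e / 2" using \<open>z \<noteq> 0\<close> e(1) by (simp add: w_def)
  with e have "w \<in> C" "- w \<in> C" by (auto simp: subset_iff)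
  hence "w \<in> C \<inter> uminus ` C" by (auto intro!: image_eqI[of w uminus "- w"])
  hence "w = 0" using assms(1) unfolding closed_cone_def by blast
  thus False using nw e by simp
qed

lemma interior_minus_scaleR:
  fixes C :: "'a::real_normed_vector set"
  assumes "y \<in> interior C"
  shows "\<exists>a>0. y - a *\<^sub>R v \<in> C"
proof -
  obtain e where e: "e > 0" "ball y e \<subseteq> C" using assms mem_interior by blast
  have "0 < norm v + 1" by (simp add: add_nonneg_pos)
  define a where "a = e / (2 * (norm v + 1))"
  have a: "a > 0" using e \<open>0 < norm v + 1\<close> by (simp add: a_def)
  have "norm (a *\<^sub>R v) \<le> a * (norm v + 1)" using a by simp
  also have "\<dots> = e / 2" using \<open>0 < norm v + 1\<close> by (simp add: a_def field_simps)
  also have "\<dots> < e" using e by simp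
  finally have "y - a *\<^sub>R v \<in> ball y e" by (simp add: dist_norm)
  thus ?thesis using e a by blast
qed

lemma closed_cone_scaleR_interior_minus:
  fixes C :: "'a::real_normed_vector set"
  assumes "closed_cone C" "v \<in> interior C"
  shows "\<exists>b>0. b *\<^sub>R v - y \<in> C"
proof -
  obtain t where t: "t > 0" "v - t *\<^sub>R y \<in> C" using interior_minus_scaleR[OF assms(2)] by blast
  have "(1 / t) *\<^sub>R (v - t *\<^sub>R y) \<in> C" using closed_cone_scaleR[OF assms(1) t(2)] t(1) by simp
  thus ?thesis using t(1) by (intro exI[of _ "1 / t"]) (simp add: scaleR_diff_right)
qed

lemma cone_eigenvalue_pos:
  fixes C :: "'a::real_normed_vector set"
  assumes "closed_cone C" "0 \<notin> interior C" "f ` interior C \<subseteq> interior C"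
    and "v \<in> interior C" "f v = \<mu> *\<^sub>R v"
  shows "0 < \<mu>"
proof (rule ccontr)
  assume "\<not> 0 < \<mu>"
  have "f v \<in> interior C" using assms(3,4) by blast
  hence "\<mu> \<noteq> 0" using assms(2,5) by auto
  have "f v \<in> C" using \<open>f v \<in> interior C\<close> interior_subset by blast
  moreover have "0 \<le> - inverse \<mu>" using \<open>\<not> 0 < \<mu>\<close> by simp
  ultimately have "(- inverse \<mu>) *\<^sub>R f v \<in> C" by (rule closed_cone_scaleR[OF assms(1)])
  hence "- v \<in> C" using assms(5) \<open>\<mu> \<noteq> 0\<close> by simp
  hence "v \<in> C \<inter> uminus ` C"
    using assms(4) interior_subset by (auto intro!: image_eqI[of v uminus "- v"])
  hence "v = 0" using assms(1) unfolding closed_cone_def by blast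
  thus False using assms(2,4) by blast
qed

lemma order_preserving_on_scaleR:
  assumes "closed_cone C" "order_preserving_on C U f" "0 \<le> c"
  shows "order_preserving_on C U (\<lambda>y. c *\<^sub>R f y)"
  using assms closed_cone_scaleR[OF assms(1)]
  by (auto simp: order_preserving_on_def cone_le_def simp flip: scaleR_diff_right)

lemma homogeneous_on_scaleR:
  "homogeneous_on U f \<Longrightarrow> homogeneous_on U (\<lambda>y. c *\<^sub>R f y)"
  by (simp add: homogeneous_on_def)

lemma funpow_in:
  assumes "h ` U \<subseteq> U" "y \<in> U"
  shows "(h ^^ k) y \<in> U"
  using assms by (induction k) auto

lemma fixed_point_orbit_norm_bounds:
  fixes C :: "'a::real_normed_vector set"
  assumes cone: "closed_cone C" "normal_cone C" "0 \<notin> interior C"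
    and T: "T ` interior C \<subseteq> interior C" "order_preserving_on C (interior C) T"
      "homogeneous_on (interior C) T"
    and v: "v \<in> interior C" "T v = v"
    and y: "y \<in> interior C"
  shows "\<exists>c\<^sub>1 c\<^sub>2. 0 < c\<^sub>1 \<and> (\<forall>k. c\<^sub>1 \<le> norm ((T ^^ k) y) \<and> norm ((T ^^ k) y) \<le> c\<^sub>2)"
proof -
  obtain \<kappa> where \<kappa>: "\<kappa> > 0" and normal: "\<And>p q. p \<in> C \<Longrightarrow> q - p \<in> C \<Longrightarrow> norm p \<le> \<kappa> * norm q"
    using cone(2) unfolding normal_cone_def cone_le_def by auto
  have iter: "(T ^^ k) y \<in> interior C" for k using funpow_in[OF T(1) y] .
  have fixed: "T (t *\<^sub>R v) = t *\<^sub>R v" "t *\<^sub>R v \<in> interior C" if "t > 0" for t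
    using T(3) v that closed_cone_scaleR_interior[OF cone(1) v(1)] by (auto simp: homogeneous_on_def)
  have mono: "T z - T w \<in> C" if "w \<in> interior C" "z \<in> interior C" "z - w \<in> C" for w z
    using T(2) that unfolding order_preserving_on_def cone_le_def by blast
  obtain a where a: "a > 0" "y - a *\<^sub>R v \<in> C" using interior_minus_scaleR[OF y] by blast
  obtain b where b: "b > 0" "b *\<^sub>R v - y \<in> C"
    using closed_cone_scaleR_interior_minus[OF cone(1) v(1)] by blast
  have lower: "(T ^^ k) y - a *\<^sub>R v \<in> C" for k
  proof (induction k)
    case (Suc k)
    show ?case using mono[OF fixed(2)[OF a(1)] iter Suc.IH] fixed(1)[OF a(1)] by simp
  qed (use a in simp)
  have upper: "b *\<^sub>R v - (T ^^ k) y \<in> C" for k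
  proof (induction k)
    case (Suc k)
    show ?case using mono[OF iter fixed(2)[OF b(1)] Suc.IH] fixed(1)[OF b(1)] by simp
  qed (use b in simp)
  have "v \<noteq> 0" using cone(3) v(1) by blast
  have "a * norm v \<le> \<kappa> * norm ((T ^^ k) y)" for k
    using normal[OF _ lower[of k]] fixed(2)[OF a(1)] interior_subset a(1) by fastforce
  hence "a * norm v / \<kappa> \<le> norm ((T ^^ k) y)" for k
    using \<kappa> by (simp add: divide_le_eq mult.commute)
  moreover have "norm ((T ^^ k) y) \<le> \<kappa> * (b * norm v)" for k
    using normal[OF _ upper[of k]] iter interior_subset b(1) by fastforce
  moreover have "a * norm v / \<kappa> > 0" using a(1) \<open>v \<noteq> 0\<close> \<kappa> by simp
  ultimately show ?thesis by blast
qed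

lemma cone_eigenvalue_rescaled_orbit_bounds:
  fixes C :: "'a::real_normed_vector set"
  assumes cone: "closed_cone C" "normal_cone C" "0 \<notin> interior C"
    and f: "f ` interior C \<subseteq> interior C" "order_preserving_on C (interior C) f"
      "homogeneous_on (interior C) f"
    and v: "v \<in> interior C" "f v = \<mu> *\<^sub>R v"
    and y: "y \<in> interior C"
  shows "\<exists>c\<^sub>1 c\<^sub>2. 0 < c\<^sub>1 \<and> (\<forall>k. c\<^sub>1 \<le> norm (((\<lambda>y. inverse \<mu> *\<^sub>R f y) ^^ k) y)
                            \<and> norm (((\<lambda>y. inverse \<mu> *\<^sub>R f y) ^^ k) y) \<le> c\<^sub>2)"
proof (rule fixed_point_orbit_norm_bounds[OF cone _ _ _ v(1) _ y])
  have "0 < \<mu>" using cone_eigenvalue_pos[OF cone(1,3) f(1) v] .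
  thus "(\<lambda>y. inverse \<mu> *\<^sub>R f y) ` interior C \<subseteq> interior C"
    using f(1) closed_cone_scaleR_interior[OF cone(1)] by auto
  show "order_preserving_on C (interior C) (\<lambda>y. inverse \<mu> *\<^sub>R f y)"
    using order_preserving_on_scaleR[OF cone(1) f(2)] \<open>0 < \<mu>\<close> by simp
  show "homogeneous_on (interior C) (\<lambda>y. inverse \<mu> *\<^sub>R f y)"
    using homogeneous_on_scaleR[OF f(3)] .
  show "inverse \<mu> *\<^sub>R f v = v" using v(2) \<open>0 < \<mu>\<close> by simp
qed

lemma funpow_scaleR_homogeneous:
  assumes "homogeneous_on U T" "T ` U \<subseteq> U" "0 < \<mu>" "y \<in> U"
  shows "((\<lambda>y. \<mu> *\<^sub>R T y) ^^ k) y = (\<mu> ^ k) *\<^sub>R (T ^^ k) y"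
proof (induction k)
  case (Suc k)
  have "(T ^^ k) y \<in> U" using funpow_in[OF assms(2,4)] .
  hence "T ((\<mu> ^ k) *\<^sub>R (T ^^ k) y) = (\<mu> ^ k) *\<^sub>R T ((T ^^ k) y)"
    using assms(1,3) by (simp add: homogeneous_on_def)
  thus ?case using Suc.IH by simp
qed simp

lemma funpow_normalize_homogeneous:
  assumes "homogeneous_on U h" "h ` U \<subseteq> U" "0 \<notin> U" "y \<in> U"
  shows "((\<lambda>y. inverse (norm (h y)) *\<^sub>R h y) ^^ Suc k) y
           = inverse (norm ((h ^^ Suc k) y)) *\<^sub>R (h ^^ Suc k) y"
proof (induction k)
  case (Suc k)
  let ?z = "(h ^^ Suc k) y"
  have "?z \<in> U" using funpow_in[OF assms(2,4)] .
  hence "0 < inverse (norm ?z)" using assms(3) by auto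
  hence "h (inverse (norm ?z) *\<^sub>R ?z) = inverse (norm ?z) *\<^sub>R h ?z"
    using assms(1) \<open>?z \<in> U\<close> by (simp add: homogeneous_on_def)
  thus ?case using Suc.IH \<open>0 < inverse (norm ?z)\<close> by simp
qed simp

lemma power_times_bounded_root_tendsto:
  fixes a :: "nat \<Rightarrow> real"
  assumes "0 < \<mu>" "0 < c\<^sub>1" "\<And>k. c\<^sub>1 \<le> a k" "\<And>k. a k \<le> c\<^sub>2"
  shows "(\<lambda>k. (\<mu> ^ k * a k) powr (1 / real k)) \<longlonglongrightarrow> \<mu>"
proof -
  have root: "(\<lambda>k. \<mu> * c powr (1 / real k)) \<longlonglongrightarrow> \<mu>" if "0 < c" for c
  proof -
    have "(\<lambda>k. c powr (1 / real k)) \<longlonglongrightarrow> c powr 0"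
      by (rule tendsto_powr) (use that lim_1_over_n in auto)
    hence "(\<lambda>k. \<mu> * c powr (1 / real k)) \<longlonglongrightarrow> \<mu> * 1" using that by (intro tendsto_mult_left) simp
    thus ?thesis by simp
  qed
  have a_pos: "0 < a k" for k using assms(2,3) less_le_trans by blast
  have eq: "(\<mu> ^ k * a k) powr (1 / real k) = \<mu> * a k powr (1 / real k)" if "k \<ge> 1" for k
  proof -
    have "(\<mu> ^ k) powr (1 / real k) = (\<mu> powr real k) powr (1 / real k)"
      using assms(1) by (simp add: powr_realpow)
    also have "\<dots> = \<mu>" using assms(1) that by (simp add: powr_powr)
    finally show ?thesis using assms(1) a_pos by (simp add: powr_mult)
  qed
  have lower: "c\<^sub>1 powr (1 / real k) \<le> a k powr (1 / real k)" for k
    by (rule powr_mono2) (use assms in auto)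
  have upper: "a k powr (1 / real k) \<le> c\<^sub>2 powr (1 / real k)" for k
    by (rule powr_mono2) (use assms a_pos in \<open>auto intro: less_imp_le\<close>)
  have "0 < c\<^sub>2" using a_pos assms(4) less_le_trans by blast
  have lower_ev: "\<forall>\<^sub>F k in sequentially. \<mu> * c\<^sub>1 powr (1 / real k) \<le> (\<mu> ^ k * a k) powr (1 / real k)"
    using eventually_ge_at_top[of 1] by eventually_elim (simp add: eq lower assms(1))
  have upper_ev: "\<forall>\<^sub>F k in sequentially. (\<mu> ^ k * a k) powr (1 / real k) \<le> \<mu> * c\<^sub>2 powr (1 / real k)"
    using eventually_ge_at_top[of 1] by eventually_elim (simp add: eq upper assms(1))
  show ?thesis by (rule tendsto_sandwich[OF lower_ev upper_ev root[OF assms(2)] root[OF \<open>0 < c\<^sub>2\<close>]])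
qed

lemma cone_spectral_radius_eigenvalue:
  fixes C :: "'a::real_normed_vector set"
  assumes cone: "closed_cone C" "normal_cone C" "0 \<notin> interior C"
    and f: "f ` interior C \<subseteq> interior C" "order_preserving_on C (interior C) f"
      "homogeneous_on (interior C) f"
    and v: "v \<in> interior C" "f v = \<mu> *\<^sub>R v"
  shows "cone_spectral_radius C f = \<mu>"
proof -
  define x\<^sub>0 where "x\<^sub>0 = (SOME x. x \<in> interior C)"
  define T where "T = (\<lambda>y. inverse \<mu> *\<^sub>R f y)"
  have "x\<^sub>0 \<in> interior C" using v(1) unfolding x\<^sub>0_def by (rule someI)
  obtain c\<^sub>1 c\<^sub>2 where c: "0 < c\<^sub>1" "\<And>k. c\<^sub>1 \<le> norm ((T ^^ k) x\<^sub>0)" "\<And>k. norm ((T ^^ k) x\<^sub>0) \<le> c\<^sub>2"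
    using cone_eigenvalue_rescaled_orbit_bounds[OF cone f v \<open>x\<^sub>0 \<in> interior C\<close>]
    unfolding T_def by blast
  have "0 < \<mu>" using cone_eigenvalue_pos[OF cone(1,3) f(1) v] .
  have "f = (\<lambda>y. \<mu> *\<^sub>R T y)" using \<open>0 < \<mu>\<close> by (simp add: T_def)
  moreover have "T ` interior C \<subseteq> interior C"
    using f(1) \<open>0 < \<mu>\<close> closed_cone_scaleR_interior[OF cone(1)] by (auto simp: T_def)
  moreover have "homogeneous_on (interior C) T"
    unfolding T_def by (rule homogeneous_on_scaleR[OF f(3)])
  ultimately have "norm ((f ^^ k) x\<^sub>0) = \<mu> ^ k * norm ((T ^^ k) x\<^sub>0)" for k
    using funpow_scaleR_homogeneous[OF _ _ \<open>0 < \<mu>\<close> \<open>x\<^sub>0 \<in> interior C\<close>] \<open>0 < \<mu>\<close> by simp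
  hence "(\<lambda>k. norm ((f ^^ k) x\<^sub>0) powr (1 / real k)) \<longlonglongrightarrow> \<mu>"
    using power_times_bounded_root_tendsto[OF \<open>0 < \<mu>\<close> c] by simp
  hence "limsup (\<lambda>k. ereal (norm ((f ^^ k) x\<^sub>0) powr (1 / real k))) = ereal \<mu>"
    by (intro lim_imp_Limsup) simp_all
  thus ?thesis by (simp add: cone_spectral_radius_def x\<^sub>0_def)
qed

lemma orbit_eq_insert_funpow_Suc: "orbit x h = insert x (range (\<lambda>k. (h ^^ Suc k) x))"
  unfolding orbit_def
proof (intro set_eqI iffI)
  fix y assume "y \<in> range (\<lambda>k. (h ^^ k) x)"
  then obtain k where y: "y = (h ^^ k) x" by blast
  show "y \<in> insert x (range (\<lambda>k. (h ^^ Suc k) x))"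
  proof (cases k)
    case 0
    show ?thesis by (simp add: y 0)
  next
    case (Suc j)
    show ?thesis by (rule insertI2, rule range_eqI[where x = j]) (simp only: y Suc)
  qed
next
  fix y assume "y \<in> insert x (range (\<lambda>k. (h ^^ Suc k) x))"
  then consider "y = x" | j where "y = (h ^^ Suc j) x" by blast
  thus "y \<in> range (\<lambda>k. (h ^^ k) x)"
  proof cases
    case 1
    show ?thesis by (rule range_eqI[where x = 0]) (simp add: 1)
  next
    case (2 j)
    show ?thesis by (rule range_eqI[where x = "Suc j"]) (simp only: 2)
  qed
qed

lemma compact_closure_subset:
  fixes K :: "'a::t2_space set"
  assumes "compact K" "S \<subseteq> K"
  shows "compact (closure S)"
proof -
  have "closure S \<subseteq> K" using assms closure_minimal compact_imp_closed by blast
  hence "K \<inter> closure S = closure S" by blast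
  moreover have "compact (K \<inter> closure S)" by (rule compact_Int_closed[OF assms(1) closed_closure])
  ultimately show ?thesis by simp
qed

lemma compact_closure_insert:
  fixes S :: "'a::t2_space set"
  shows "compact (closure (insert a S)) \<longleftrightarrow> compact (closure S)"
proof
  assume "compact (closure (insert a S))"
  thus "compact (closure S)" by (rule compact_closure_subset) (use closure_subset in blast)
qed (simp add: closure_insert)

lemma compact_closure_normalize_iff:
  fixes S :: "'a::real_normed_vector set"
  assumes "0 < c\<^sub>1" "\<And>y. y \<in> S \<Longrightarrow> c\<^sub>1 \<le> norm y \<and> norm y \<le> c\<^sub>2"
  shows "compact (closure S) \<longleftrightarrow> compact (closure ((\<lambda>y. inverse (norm y) *\<^sub>R y) ` S))"
proof
  assume K: "compact (closure S)"
  have "closure S \<subseteq> {y. c\<^sub>1 \<le> norm y}"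
    using assms(2) by (intro closure_minimal closed_Collect_le continuous_intros) auto
  hence "continuous_on (closure S) (\<lambda>y. inverse (norm y) *\<^sub>R y)"
    using assms(1) by (intro continuous_intros) auto
  hence "compact ((\<lambda>y. inverse (norm y) *\<^sub>R y) ` closure S)"
    using K by (rule compact_continuous_image)
  thus "compact (closure ((\<lambda>y. inverse (norm y) *\<^sub>R y) ` S))"
    by (rule compact_closure_subset) (use closure_subset in blast)
next
  let ?N = "(\<lambda>y. inverse (norm y) *\<^sub>R y) ` S"
  assume K: "compact (closure ?N)"
  have "compact ((\<lambda>p. fst p *\<^sub>R snd p) ` ({c\<^sub>1..c\<^sub>2} \<times> closure ?N))"
    using K by (intro compact_continuous_image compact_Times compact_Icc continuous_intros)
  moreover have "S \<subseteq> (\<lambda>p. fst p *\<^sub>R snd p) ` ({c\<^sub>1..c\<^sub>2} \<times> closure ?N)"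
  proof
    fix y assume "y \<in> S"
    hence "norm y \<noteq> 0" using assms by fastforce
    hence "y = (\<lambda>p. fst p *\<^sub>R snd p) (norm y, inverse (norm y) *\<^sub>R y)" by simp
    moreover have "(norm y, inverse (norm y) *\<^sub>R y) \<in> {c\<^sub>1..c\<^sub>2} \<times> closure ?N"
      using assms(2) \<open>y \<in> S\<close> closure_subset by fastforce
    ultimately show "y \<in> (\<lambda>p. fst p *\<^sub>R snd p) ` ({c\<^sub>1..c\<^sub>2} \<times> closure ?N)" by blast
  qed
  ultimately show "compact (closure S)" by (rule compact_closure_subset)
qed

theorem mainTheorem4:
  fixes C :: "'a::banach set" and f :: "'a \<Rightarrow> 'a"
  assumes "closed_cone C" and "normal_cone C" and "interior C \<noteq> {}"
    and "f ` interior C \<subseteq> interior C"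
    and "order_preserving_on C (interior C) f"
    and "homogeneous_on (interior C) f"
    and "\<exists>v\<in>interior C. \<exists>\<mu>::real. f v = \<mu> *\<^sub>R v"
    and "x \<in> interior C"
  shows "compact (closure (orbit x (\<lambda>y. inverse (cone_spectral_radius C f) *\<^sub>R f y)))
     \<longleftrightarrow> compact (closure (orbit x (\<lambda>y. inverse (norm (f y)) *\<^sub>R f y)))"
proof (cases "0 \<in> interior C")
  case True
  hence "closure S \<subseteq> {0}" for S :: "'a set" using closed_cone_zero_interior[OF assms(1)] by blast
  hence "compact (closure S)" for S :: "'a set" by (meson finite.simps finite_imp_compact finite_subset)
  thus ?thesis by blast
next
  case False
  note cone = assms(1,2) False and f = assms(4-6)
  obtain v \<mu> where v: "v \<in> interior C" "f v = \<mu> *\<^sub>R v" using assms(7) by blast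
  define T where "T = (\<lambda>y. inverse \<mu> *\<^sub>R f y)"
  let ?S = "range (\<lambda>k. (T ^^ Suc k) x)"
  have "0 < \<mu>" using cone_eigenvalue_pos[OF cone(1,3) f(1) v] .
  have "T ` interior C \<subseteq> interior C"
    using f(1) \<open>0 < \<mu>\<close> closed_cone_scaleR_interior[OF cone(1)] by (auto simp: T_def)
  have "homogeneous_on (interior C) T"
    unfolding T_def by (rule homogeneous_on_scaleR[OF f(3)])
  have normalized: "(\<lambda>y. inverse (norm (f y)) *\<^sub>R f y) = (\<lambda>y. inverse (norm (T y)) *\<^sub>R T y)"
    using \<open>0 < \<mu>\<close> by (auto simp: T_def)
  obtain c\<^sub>1 c\<^sub>2 where "0 < c\<^sub>1" "\<And>k. c\<^sub>1 \<le> norm ((T ^^ k) x) \<and> norm ((T ^^ k) x) \<le> c\<^sub>2"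
    using cone_eigenvalue_rescaled_orbit_bounds[OF cone f v assms(8)] unfolding T_def by blast
  hence "compact (closure ?S) \<longleftrightarrow> compact (closure ((\<lambda>y. inverse (norm y) *\<^sub>R y) ` ?S))"
    by (intro compact_closure_normalize_iff) blast+
  also have "(\<lambda>y. inverse (norm y) *\<^sub>R y) ` ?S
      = range (\<lambda>k. ((\<lambda>y. inverse (norm (T y)) *\<^sub>R T y) ^^ Suc k) x)"
    using funpow_normalize_homogeneous[OF \<open>homogeneous_on (interior C) T\<close>
        \<open>T ` interior C \<subseteq> interior C\<close> False assms(8)]
    by (simp add: image_image)
  finally show ?thesis
    unfolding cone_spectral_radius_eigenvalue[OF cone f v] normalized
      orbit_eq_insert_funpow_Suc compact_closure_insert T_def .
qed

end
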